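(* Let $G=(V,E)$ be a connected undirected graph with $n=|V|$ vertices and minimum degree $D$, let $\delta>0$, and let $T(n)$ be the $\delta$-mixing time of $G$. Consider a standard random walk on $G$. For any vertex $v$, any time index $j$, any integer $z \ge T(n)$ and any edge $e\in E$, the conditional probability, given that the walk is at vertex $v$ at time index $j$, that the walk traverses edge $e$ between time indices $j+z$ and $j+z+1$ lies between $\frac{1}{|E|} - \frac{2\delta}{D}$ and $\frac{1}{|E|}+\frac{2\delta}{D}$.
   Context: A standard random walk moves at each step to a uniformly random neighbor of the current vertex; its stationary distribution is $\mu(u)=d_u/(2|E|)$ with $d_u$ the degree of $u$. The $\delta$-mixing time is the smallest $t'$ such that, for every starting vertex, the distribution $\mu'$ of the walk's position after $t'$ steps satisfies $\|\mu-\mu'\|_\infty\le\delta$. The walk traverses edge $\{v_{i-1},v_i\}$ between time indices $i-1$ and $i$, where $v_i$ is its position at time $i$. *)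

theory Defs
  imports Complex_Main
begin

definition simple_graph :: "'a set \<Rightarrow> ('a \<Rightarrow> 'a \<Rightarrow> bool) \<Rightarrow> bool" where
  "simple_graph V E \<longleftrightarrow> finite V \<and> (\<forall>u w. E u w \<longrightarrow> u \<in> V \<and> w \<in> V)
     \<and> (\<forall>u w. E u w \<longrightarrow> E w u) \<and> (\<forall>u. \<not> E u u)"

definition connected_graph :: "'a set \<Rightarrow> ('a \<Rightarrow> 'a \<Rightarrow> bool) \<Rightarrow> bool" where
  "connected_graph V E \<longleftrightarrow> V \<noteq> {} \<and> (\<forall>u\<in>V. \<forall>w\<in>V. E\<^sup>*\<^sup>* u w)"

definition edges :: "'a set \<Rightarrow> ('a \<Rightarrow> 'a \<Rightarrow> bool) \<Rightarrow> 'a set set" where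
  "edges V E = {{u, w} | u w. u \<in> V \<and> w \<in> V \<and> E u w}"

definition degree :: "'a set \<Rightarrow> ('a \<Rightarrow> 'a \<Rightarrow> bool) \<Rightarrow> 'a \<Rightarrow> nat" where
  "degree V E u = card {w \<in> V. E u w}"

definition min_degree :: "'a set \<Rightarrow> ('a \<Rightarrow> 'a \<Rightarrow> bool) \<Rightarrow> nat" where
  "min_degree V E = Min (degree V E ` V)"

definition trans_prob :: "'a set \<Rightarrow> ('a \<Rightarrow> 'a \<Rightarrow> bool) \<Rightarrow> 'a \<Rightarrow> 'a \<Rightarrow> real" where
  "trans_prob V E u w = (if E u w then 1 / real (degree V E u) else 0)"

definition stationary :: "'a set \<Rightarrow> ('a \<Rightarrow> 'a \<Rightarrow> bool) \<Rightarrow> 'a \<Rightarrow> real" where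
  "stationary V E u = real (degree V E u) / (2 * real (card (edges V E)))"

fun step_dist :: "'a set \<Rightarrow> ('a \<Rightarrow> 'a \<Rightarrow> bool) \<Rightarrow> nat \<Rightarrow> 'a \<Rightarrow> 'a \<Rightarrow> real" where
  "step_dist V E 0 u x = (if x = u then 1 else 0)"
| "step_dist V E (Suc t) u x = (\<Sum>w\<in>V. step_dist V E t u w * trans_prob V E w x)"

definition is_mixed :: "'a set \<Rightarrow> ('a \<Rightarrow> 'a \<Rightarrow> bool) \<Rightarrow> real \<Rightarrow> nat \<Rightarrow> bool" where
  "is_mixed V E \<delta> t \<longleftrightarrow>
     (\<forall>u\<in>V. \<forall>x\<in>V. \<bar>stationary V E x - step_dist V E t u x\<bar> \<le> \<delta>)"

definition mixing_time :: "'a set \<Rightarrow> ('a \<Rightarrow> 'a \<Rightarrow> bool) \<Rightarrow> real \<Rightarrow> nat" where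
  "mixing_time V E \<delta> = (LEAST t. is_mixed V E \<delta> t)"

definition paths :: "'a set \<Rightarrow> nat \<Rightarrow> 'a list set" where
  "paths V k = {xs. set xs \<subseteq> V \<and> length xs = Suc k}"

definition path_prob :: "'a set \<Rightarrow> ('a \<Rightarrow> 'a \<Rightarrow> bool) \<Rightarrow> ('a \<Rightarrow> real) \<Rightarrow> 'a list \<Rightarrow> real" where
  "path_prob V E \<mu>0 xs =
     \<mu>0 (hd xs) * (\<Prod>i<length xs - 1. trans_prob V E (xs ! i) (xs ! Suc i))"

definition walk_Pr ::
  "'a set \<Rightarrow> ('a \<Rightarrow> 'a \<Rightarrow> bool) \<Rightarrow> ('a \<Rightarrow> real) \<Rightarrow> nat \<Rightarrow> ('a list \<Rightarrow> bool) \<Rightarrow> real" where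
  "walk_Pr V E \<mu>0 k A = (\<Sum>xs\<in>{xs \<in> paths V k. A xs}. path_prob V E \<mu>0 xs)"

definition init_dist :: "'a set \<Rightarrow> ('a \<Rightarrow> real) \<Rightarrow> bool" where
  "init_dist V \<mu>0 \<longleftrightarrow> (\<forall>u\<in>V. 0 \<le> \<mu>0 u) \<and> (\<Sum>u\<in>V. \<mu>0 u) = 1"

end

theory Submission
  imports Defs
begin

text \<open>By the Markov property, the probability of being at v at time j, then at p
  at time j + z and at q at time j + z + 1 factors as Pr[at v at time j] times
  P^z(v, p) times P(p, q). Conditioning on the first event, traversing the edge
  {a, b} therefore has probability P^z(v, a)/d_a + P^z(v, b)/d_b. Once z is past
  the mixing time, P^z(v, p) is within \<delta> of d_p/(2|E|), so each summand is within
  \<delta>/D of 1/(2|E|).\<close>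

lemma finite_paths: "finite V \<Longrightarrow> finite (paths V k)"
  unfolding paths_def by (rule finite_lists_length_eq)

lemma last_in_paths: "xs \<in> paths V k \<Longrightarrow> last xs \<in> V"
  unfolding paths_def by (auto intro!: last_in_set[THEN subsetD[rotated]] simp del: last_in_set)

lemma walk_Pr_cong:
  assumes "\<And>xs. xs \<in> paths V k \<Longrightarrow> A xs \<longleftrightarrow> B xs"
  shows "walk_Pr V E \<mu> k A = walk_Pr V E \<mu> k B"
  unfolding walk_Pr_def using assms by metis

lemma walk_Pr_disjoint_union:
  assumes "finite V" and "\<And>xs. xs \<in> paths V k \<Longrightarrow> \<not> (A xs \<and> B xs)"
  shows "walk_Pr V E \<mu> k (\<lambda>xs. A xs \<or> B xs) = walk_Pr V E \<mu> k A + walk_Pr V E \<mu> k B"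
proof -
  have "{xs \<in> paths V k. A xs \<or> B xs} = {xs \<in> paths V k. A xs} \<union> {xs \<in> paths V k. B xs}"
    by blast
  then show ?thesis
    unfolding walk_Pr_def using assms finite_paths[OF assms(1)]
    by (simp add: sum.union_disjoint disjoint_iff)
qed

lemma path_prob_snoc:
  assumes "length ys = Suc k"
  shows "path_prob V E \<mu> (ys @ [x]) = path_prob V E \<mu> ys * trans_prob V E (last ys) x"
proof -
  have "last ys = ys ! k"
    using assms by (cases ys rule: rev_cases) (auto simp: nth_append)
  moreover have "(\<Prod>i<k. trans_prob V E ((ys @ [x]) ! i) ((ys @ [x]) ! Suc i))
      = (\<Prod>i<k. trans_prob V E (ys ! i) (ys ! Suc i))"
    using assms by (intro prod.cong) (auto simp: nth_append)
  moreover have "hd (ys @ [x]) = hd ys"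
    using assms by (cases ys) auto
  ultimately show ?thesis
    using assms by (simp add: path_prob_def nth_append mult.assoc)
qed

text \<open>The forward algorithm: the total probability of the trajectories that are in
  S i at every time i \<le> k and end at x.\<close>

fun constrained_mass ::
  "'a set \<Rightarrow> ('a \<Rightarrow> 'a \<Rightarrow> bool) \<Rightarrow> ('a \<Rightarrow> real) \<Rightarrow> (nat \<Rightarrow> 'a set) \<Rightarrow> nat \<Rightarrow> 'a \<Rightarrow> real" where
  "constrained_mass V E \<mu> S 0 x = (if x \<in> S 0 then \<mu> x else 0)"
| "constrained_mass V E \<mu> S (Suc k) x =
     (if x \<in> S (Suc k) then (\<Sum>w\<in>V. constrained_mass V E \<mu> S k w * trans_prob V E w x) else 0)"

abbreviation visited_at :: "nat \<Rightarrow> 'a \<Rightarrow> nat \<Rightarrow> 'a set" where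
  "visited_at j v \<equiv> \<lambda>i. {x. i = j \<longrightarrow> x = v}"

lemma constrained_paths_snoc:
  assumes "x \<in> V" "x \<in> S (Suc k)"
  shows "{xs \<in> paths V (Suc k). (\<forall>i\<le>Suc k. xs ! i \<in> S i) \<and> last xs = x}
       = (\<lambda>ys. ys @ [x]) ` {ys \<in> paths V k. \<forall>i\<le>k. ys ! i \<in> S i}"
proof (intro equalityI subsetI)
  fix xs assume xs: "xs \<in> {xs \<in> paths V (Suc k). (\<forall>i\<le>Suc k. xs ! i \<in> S i) \<and> last xs = x}"
  then have "xs = butlast xs @ [x]"
    by (metis (mono_tags, lifting) append_butlast_last_id list.size(3)
        mem_Collect_eq nat.distinct(1) paths_def)
  moreover have "butlast xs \<in> paths V k" "\<forall>i\<le>k. butlast xs ! i \<in> S i"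
    using xs by (auto simp: paths_def nth_butlast dest: in_set_butlastD)
  ultimately show "xs \<in> (\<lambda>ys. ys @ [x]) ` {ys \<in> paths V k. \<forall>i\<le>k. ys ! i \<in> S i}"
    by blast
next
  fix xs assume "xs \<in> (\<lambda>ys. ys @ [x]) ` {ys \<in> paths V k. \<forall>i\<le>k. ys ! i \<in> S i}"
  then obtain ys where "xs = ys @ [x]" "ys \<in> paths V k" "\<forall>i\<le>k. ys ! i \<in> S i"
    by blast
  then show "xs \<in> {xs \<in> paths V (Suc k). (\<forall>i\<le>Suc k. xs ! i \<in> S i) \<and> last xs = x}"
    using assms by (auto simp: paths_def nth_append le_Suc_eq)
qed

lemma sum_constrained_paths_last:
  assumes "finite V" "x \<in> V"
  shows "(\<Sum>xs\<in>{xs \<in> paths V k. (\<forall>i\<le>k. xs ! i \<in> S i) \<and> last xs = x}. path_prob V E \<mu> xs)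
       = constrained_mass V E \<mu> S k x"
  using assms(2)
proof (induction k arbitrary: x)
  case 0
  have "{xs \<in> paths V 0. (\<forall>i\<le>0. xs ! i \<in> S i) \<and> last xs = x} = (if x \<in> S 0 then {[x]} else {})"
    using 0 by (auto simp: paths_def length_Suc_conv)
  then show ?case by (simp add: path_prob_def)
next
  case (Suc k)
  let ?A = "{ys \<in> paths V k. \<forall>i\<le>k. ys ! i \<in> S i}"
  show ?case
  proof (cases "x \<in> S (Suc k)")
    case False
    have "last xs = xs ! Suc k" if "xs \<in> paths V (Suc k)" for xs
      using that unfolding paths_def
      by (metis (mono_tags) diff_Suc_1 last_conv_nth length_0_conv mem_Collect_eq nat.distinct(1))
    then have "{xs \<in> paths V (Suc k). (\<forall>i\<le>Suc k. xs ! i \<in> S i) \<and> last xs = x} = {}"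
      using False by auto
    with False show ?thesis by (simp only: sum.empty constrained_mass.simps if_False)
  next
    case True
    have "(\<Sum>xs\<in>{xs \<in> paths V (Suc k). (\<forall>i\<le>Suc k. xs ! i \<in> S i) \<and> last xs = x}. path_prob V E \<mu> xs)
        = (\<Sum>ys\<in>?A. path_prob V E \<mu> ys * trans_prob V E (last ys) x)"
      unfolding constrained_paths_snoc[of x V S k, OF Suc.prems True]
      by (simp add: sum.reindex inj_on_def paths_def path_prob_snoc)
    also have "\<dots> = (\<Sum>w\<in>V. \<Sum>ys\<in>{ys \<in> ?A. last ys = w}. path_prob V E \<mu> ys * trans_prob V E w x)"
      using finite_paths[OF assms(1)] assms(1)
      by (subst sum.group[symmetric, where g = last and T = V]) (auto intro: last_in_paths)
    also have "\<dots> = (\<Sum>w\<in>V. constrained_mass V E \<mu> S k w * trans_prob V E w x)"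
      by (intro sum.cong refl) (simp add: Suc.IH[symmetric] sum_distrib_right)
    finally show ?thesis using True by simp
  qed
qed

lemma walk_Pr_constrained:
  assumes "finite V"
  shows "walk_Pr V E \<mu> k (\<lambda>xs. \<forall>i\<le>k. xs ! i \<in> S i) = (\<Sum>x\<in>V. constrained_mass V E \<mu> S k x)"
proof -
  have "walk_Pr V E \<mu> k (\<lambda>xs. \<forall>i\<le>k. xs ! i \<in> S i)
      = (\<Sum>x\<in>V. \<Sum>xs\<in>{xs \<in> paths V k. (\<forall>i\<le>k. xs ! i \<in> S i) \<and> last xs = x}. path_prob V E \<mu> xs)"
    unfolding walk_Pr_def using finite_paths[OF assms] assms
    by (subst sum.group[symmetric, where g = last and T = V]) (auto intro: last_in_paths)
  then show ?thesis
    by (simp add: sum_constrained_paths_last[OF assms])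
qed

lemma constrained_mass_outside: "x \<notin> S k \<Longrightarrow> constrained_mass V E \<mu> S k x = 0"
  by (cases k) auto

lemma constrained_mass_cong:
  "(\<And>i. i \<le> k \<Longrightarrow> S i = S' i) \<Longrightarrow> constrained_mass V E \<mu> S k x = constrained_mass V E \<mu> S' k x"
  by (induction k arbitrary: x) auto

lemma constrained_mass_restrict:
  assumes "\<And>i. i < k \<Longrightarrow> S i = S' i" "S k = S' k \<inter> A"
  shows "constrained_mass V E \<mu> S k x = (if x \<in> A then constrained_mass V E \<mu> S' k x else 0)"
proof (cases k)
  case (Suc k')
  then have "constrained_mass V E \<mu> S k' w = constrained_mass V E \<mu> S' k' w" for w
    using assms(1) by (intro constrained_mass_cong) auto
  then show ?thesis using assms(2) Suc by auto
qed (use assms in auto)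

lemma constrained_mass_after_visit:
  "constrained_mass V E \<mu> (visited_at j v) (j + t) x
     = constrained_mass V E \<mu> (visited_at j v) j v * step_dist V E t v x"
proof (induction t arbitrary: x)
  case 0
  then show ?case by (cases "x = v") (auto intro: constrained_mass_outside)
next
  case (Suc t)
  then show ?case by (simp add: sum_distrib_left mult.assoc)
qed

lemma constrained_mass_visit_then_edge:
  assumes "finite V" "p \<in> V"
  shows "constrained_mass V E \<mu>
           (\<lambda>i. {x. (i = j \<longrightarrow> x = v) \<and> (i = j + z \<longrightarrow> x = p) \<and> (i = Suc (j + z) \<longrightarrow> x = q)})
           (Suc (j + z)) x
       = (if x = q then constrained_mass V E \<mu> (visited_at j v) j v * step_dist V E z v p * trans_prob V E p q
          else 0)"
    (is "constrained_mass V E \<mu> ?S _ x = _")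
proof -
  let ?c = "constrained_mass V E \<mu> (visited_at j v) j v"
  have "constrained_mass V E \<mu> ?S (j + z) w = (if w = p then ?c * step_dist V E z v p else 0)" for w
    by (subst constrained_mass_restrict[where S' = "visited_at j v" and A = "{p}"])
      (auto simp: constrained_mass_after_visit)
  then have "(\<Sum>w\<in>V. constrained_mass V E \<mu> ?S (j + z) w * trans_prob V E w x)
      = (\<Sum>w\<in>V. if w = p then ?c * step_dist V E z v p * trans_prob V E p x else 0)"
    by (intro sum.cong) auto
  also have "\<dots> = ?c * step_dist V E z v p * trans_prob V E p x"
    using assms by simp
  finally show ?thesis
    by (cases "x = q") (simp_all del: constrained_mass.simps add: constrained_mass.simps(2))
qed

lemma walk_Pr_visit_step:
  assumes "finite V" "p \<in> V" "q \<in> V"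
  shows "walk_Pr V E \<mu> (Suc (j + z)) (\<lambda>xs. xs ! j = v \<and> xs ! (j + z) = p \<and> xs ! Suc (j + z) = q)
       = constrained_mass V E \<mu> (visited_at j v) j v * step_dist V E z v p * trans_prob V E p q"
proof -
  define S where "S = (\<lambda>i. {x. (i = j \<longrightarrow> x = v) \<and> (i = j + z \<longrightarrow> x = p) \<and> (i = Suc (j + z) \<longrightarrow> x = q)})"
  have "walk_Pr V E \<mu> (Suc (j + z)) (\<lambda>xs. xs ! j = v \<and> xs ! (j + z) = p \<and> xs ! Suc (j + z) = q)
      = walk_Pr V E \<mu> (Suc (j + z)) (\<lambda>xs. \<forall>i\<le>Suc (j + z). xs ! i \<in> S i)"
  proof (rule walk_Pr_cong, rule iffI)
    fix xs
    assume h: "\<forall>i\<le>Suc (j + z). xs ! i \<in> S i"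
    show "xs ! j = v \<and> xs ! (j + z) = p \<and> xs ! Suc (j + z) = q"
      using h[rule_format, of j] h[rule_format, of "j + z"] h[rule_format, of "Suc (j + z)"]
      by (simp add: S_def)
  qed (auto simp: S_def)
  also have "\<dots> = (\<Sum>x\<in>V. constrained_mass V E \<mu> S (Suc (j + z)) x)"
    by (rule walk_Pr_constrained[OF assms(1)])
  also have "\<dots> = constrained_mass V E \<mu> (visited_at j v) j v * step_dist V E z v p * trans_prob V E p q"
    using assms unfolding S_def constrained_mass_visit_then_edge[OF assms(1,2)] by simp
  finally show ?thesis .
qed

lemma visited_vertex_in_V:
  assumes "0 < walk_Pr V E \<mu> k (\<lambda>xs. xs ! j = v)" "j \<le> k"
  shows "v \<in> V"
proof (rule ccontr)
  assume "v \<notin> V"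
  then have "{xs \<in> paths V k. xs ! j = v} = {}"
    using assms(2) by (auto simp: paths_def) (metis le_imp_less_Suc nth_mem subsetD)
  then show False
    using assms(1) unfolding walk_Pr_def by (simp only: sum.empty less_irrefl)
qed

locale connected_simple_graph =
  fixes V :: "'a set" and E :: "'a \<Rightarrow> 'a \<Rightarrow> bool"
  assumes simple: "simple_graph V E"
    and connected: "connected_graph V E"
    and has_edge: "\<exists>u w. E u w"
begin

lemma finite_V: "finite V"
  using simple by (simp add: simple_graph_def)

lemma edge_in_V: "E u w \<Longrightarrow> u \<in> V \<and> w \<in> V"
  using simple by (simp add: simple_graph_def)

lemma edge_sym: "E u w \<Longrightarrow> E w u"
  using simple by (simp add: simple_graph_def)

lemma degree_pos:
  assumes "u \<in> V"
  shows "0 < degree V E u"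
proof -
  obtain w where w: "w \<in> V" "w \<noteq> u"
    using has_edge edge_in_V simple by (metis simple_graph_def)
  have "E\<^sup>*\<^sup>* u w"
    using connected assms w(1) by (simp add: connected_graph_def)
  then obtain y where "E u y"
    using w(2) by (metis converse_rtranclpE)
  then have "{w \<in> V. E u w} \<noteq> {}"
    using edge_in_V by blast
  then show ?thesis
    unfolding degree_def using finite_V by (simp add: card_gt_0_iff)
qed

lemma min_degree_pos: "0 < min_degree V E"
  and min_degree_le: "u \<in> V \<Longrightarrow> min_degree V E \<le> degree V E u"
proof -
  have "V \<noteq> {}"
    using has_edge edge_in_V by blast
  then have "min_degree V E \<in> degree V E ` V"
    unfolding min_degree_def using finite_V by (intro Min_in) auto
  then show "0 < min_degree V E"
    using degree_pos by auto
  show "u \<in> V \<Longrightarrow> min_degree V E \<le> degree V E u"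
    unfolding min_degree_def using finite_V by (intro Min_le) auto
qed

lemma sum_trans_prob:
  assumes "u \<in> V"
  shows "(\<Sum>w\<in>V. trans_prob V E u w) = 1"
proof -
  have "(\<Sum>w\<in>V. trans_prob V E u w) = (\<Sum>w\<in>{w \<in> V. E u w}. 1 / real (degree V E u))"
    unfolding trans_prob_def by (rule sum.inter_filter[OF finite_V, symmetric])
  also have "\<dots> = 1"
    using degree_pos[OF assms] by (simp add: degree_def)
  finally show ?thesis .
qed

lemma step_dist_Suc_left:
  assumes "u \<in> V"
  shows "step_dist V E (Suc t) u x = (\<Sum>w\<in>V. trans_prob V E u w * step_dist V E t w x)"
proof (induction t arbitrary: x)
  case 0
  have "(\<Sum>w\<in>V. trans_prob V E u w * step_dist V E 0 w x) = (\<Sum>w\<in>V. if w = x then trans_prob V E u x else 0)"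
    by (intro sum.cong) auto
  also have "\<dots> = trans_prob V E u x"
    using finite_V edge_in_V by (auto simp: trans_prob_def)
  also have "\<dots> = (\<Sum>w\<in>V. if w = u then trans_prob V E u x else 0)"
    using finite_V assms by simp
  also have "\<dots> = step_dist V E (Suc 0) u x"
    by (simp, intro sum.cong) auto
  finally show ?case by simp
next
  case (Suc t)
  have "step_dist V E (Suc (Suc t)) u x
      = (\<Sum>y\<in>V. (\<Sum>w\<in>V. trans_prob V E u w * step_dist V E t w y) * trans_prob V E y x)"
    by (simp only: step_dist.simps(2)[of _ _ "Suc t"] Suc)
  also have "\<dots> = (\<Sum>y\<in>V. \<Sum>w\<in>V. trans_prob V E u w * (step_dist V E t w y * trans_prob V E y x))"
    by (simp add: sum_distrib_right mult.assoc)
  also have "\<dots> = (\<Sum>w\<in>V. \<Sum>y\<in>V. trans_prob V E u w * (step_dist V E t w y * trans_prob V E y x))"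
    by (rule sum.swap)
  also have "\<dots> = (\<Sum>w\<in>V. trans_prob V E u w * (\<Sum>y\<in>V. step_dist V E t w y * trans_prob V E y x))"
    by (simp only: sum_distrib_left)
  finally show ?case
    by (simp only: step_dist.simps(2))
qed

lemma sum_step_dist:
  assumes "u \<in> V"
  shows "(\<Sum>x\<in>V. step_dist V E t u x) = 1"
proof (induction t)
  case 0
  then show ?case using assms finite_V by simp
next
  case (Suc t)
  have "(\<Sum>x\<in>V. step_dist V E (Suc t) u x) = (\<Sum>x\<in>V. \<Sum>w\<in>V. step_dist V E t u w * trans_prob V E w x)"
    by simp
  also have "\<dots> = (\<Sum>w\<in>V. \<Sum>x\<in>V. step_dist V E t u w * trans_prob V E w x)"
    by (rule sum.swap)
  also have "\<dots> = (\<Sum>w\<in>V. step_dist V E t u w)"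
    by (simp add: sum_distrib_left[symmetric] sum_trans_prob)
  finally show ?case using Suc by simp
qed

text \<open>One more step averages the rows P^t(w, x) with the weights P(u, w), which
  cannot increase their distance from the stationary value.\<close>

lemma is_mixed_Suc:
  assumes "is_mixed V E \<delta> t"
  shows "is_mixed V E \<delta> (Suc t)"
  unfolding is_mixed_def
proof (intro ballI)
  fix u x assume u: "u \<in> V" and x: "x \<in> V"
  have "(\<Sum>w\<in>V. trans_prob V E u w * (stationary V E x - step_dist V E t w x))
      = (\<Sum>w\<in>V. trans_prob V E u w) * stationary V E x - (\<Sum>w\<in>V. trans_prob V E u w * step_dist V E t w x)"
    by (simp add: right_diff_distrib sum_subtractf sum_distrib_right)
  then have diff: "stationary V E x - step_dist V E (Suc t) u x
      = (\<Sum>w\<in>V. trans_prob V E u w * (stationary V E x - step_dist V E t w x))"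
    using step_dist_Suc_left[OF u, of t x] sum_trans_prob[OF u] by (simp del: step_dist.simps)
  have "\<bar>\<Sum>w\<in>V. trans_prob V E u w * (stationary V E x - step_dist V E t w x)\<bar> \<le> (\<Sum>w\<in>V. \<bar>trans_prob V E u w * (stationary V E x - step_dist V E t w x)\<bar>)"
    by (rule sum_abs)
  also have "\<dots> \<le> (\<Sum>w\<in>V. trans_prob V E u w * \<delta>)"
  proof (rule sum_mono)
    fix w assume "w \<in> V"
    then have "\<bar>stationary V E x - step_dist V E t w x\<bar> \<le> \<delta>"
      using assms x by (simp add: is_mixed_def)
    moreover have "0 \<le> trans_prob V E u w"
      by (simp add: trans_prob_def)
    ultimately show "\<bar>trans_prob V E u w * (stationary V E x - step_dist V E t w x)\<bar> \<le> trans_prob V E u w * \<delta>"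
      by (simp add: abs_mult mult_left_mono)
  qed
  also have "\<dots> = \<delta>"
    using sum_trans_prob[OF u] by (simp add: sum_distrib_right[symmetric])
  finally show "\<bar>stationary V E x - step_dist V E (Suc t) u x\<bar> \<le> \<delta>"
    unfolding diff .
qed

lemma is_mixed_mono: "is_mixed V E \<delta> t \<Longrightarrow> t \<le> z \<Longrightarrow> is_mixed V E \<delta> z"
  by (induction z) (auto intro: is_mixed_Suc simp: le_Suc_eq)

lemma is_mixed_beyond_mixing_time:
  "\<exists>t. is_mixed V E \<delta> t \<Longrightarrow> mixing_time V E \<delta> \<le> z \<Longrightarrow> is_mixed V E \<delta> z"
  unfolding mixing_time_def by (metis LeastI_ex is_mixed_mono)

lemma step_dist_div_degree_close:
  assumes "is_mixed V E \<delta> z" "0 \<le> \<delta>" "v \<in> V" "p \<in> V"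
  shows "\<bar>step_dist V E z v p / degree V E p - 1 / (2 * card (edges V E))\<bar> \<le> \<delta> / min_degree V E"
proof -
  have d: "0 < real (degree V E p)" "real (min_degree V E) \<le> degree V E p"
    using degree_pos min_degree_le assms(4) by auto
  have "step_dist V E z v p / degree V E p - 1 / (2 * card (edges V E))
      = (step_dist V E z v p - stationary V E p) / degree V E p"
    using d by (simp add: stationary_def field_simps)
  then have "\<bar>step_dist V E z v p / degree V E p - 1 / (2 * card (edges V E))\<bar>
      = \<bar>stationary V E p - step_dist V E z v p\<bar> / degree V E p"
    by (simp add: abs_minus_commute)
  also have "\<dots> \<le> \<delta> / degree V E p"
    using assms d by (simp add: is_mixed_def divide_right_mono)
  also have "\<dots> \<le> \<delta> / min_degree V E"
    using d min_degree_pos assms(2) by (simp add: frac_le)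
  finally show ?thesis .
qed

lemma walk_Pr_visit:
  assumes "v \<in> V"
  shows "walk_Pr V E \<mu> (j + t) (\<lambda>xs. xs ! j = v)
       = constrained_mass V E \<mu> (visited_at j v) j v"
proof -
  have "walk_Pr V E \<mu> (j + t) (\<lambda>xs. xs ! j = v)
      = walk_Pr V E \<mu> (j + t) (\<lambda>xs. \<forall>i\<le>j + t. xs ! i \<in> {x. i = j \<longrightarrow> x = v})"
    by (rule walk_Pr_cong) auto
  also have "\<dots> = (\<Sum>x\<in>V. constrained_mass V E \<mu> (visited_at j v) (j + t) x)"
    by (rule walk_Pr_constrained[OF finite_V])
  also have "\<dots> = constrained_mass V E \<mu> (visited_at j v) j v * (\<Sum>x\<in>V. step_dist V E t v x)"
    by (simp only: constrained_mass_after_visit sum_distrib_left)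
  finally show ?thesis
    using sum_step_dist[OF assms] by simp
qed

lemma walk_Pr_edge_given_visit:
  assumes "E a b" and pos: "0 < walk_Pr V E \<mu> (Suc (j + z)) (\<lambda>xs. xs ! j = v)"
  shows "walk_Pr V E \<mu> (Suc (j + z)) (\<lambda>xs. xs ! j = v \<and> {xs ! (j + z), xs ! Suc (j + z)} = {a, b})
           / walk_Pr V E \<mu> (Suc (j + z)) (\<lambda>xs. xs ! j = v)
       = step_dist V E z v a / degree V E a + step_dist V E z v b / degree V E b"
proof -
  let ?c = "constrained_mass V E \<mu> (visited_at j v) j v"
  have "v \<in> V"
    using pos by (rule visited_vertex_in_V) simp
  then have den: "walk_Pr V E \<mu> (Suc (j + z)) (\<lambda>xs. xs ! j = v) = ?c"
    using walk_Pr_visit[of v \<mu> j "Suc z"] by simp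
  have ab: "a \<in> V" "b \<in> V" "a \<noteq> b" "E b a"
    using assms(1) edge_in_V edge_sym simple by (auto simp: simple_graph_def)
  have "walk_Pr V E \<mu> (Suc (j + z)) (\<lambda>xs. xs ! j = v \<and> {xs ! (j + z), xs ! Suc (j + z)} = {a, b})
      = walk_Pr V E \<mu> (Suc (j + z)) (\<lambda>xs. (xs ! j = v \<and> xs ! (j + z) = a \<and> xs ! Suc (j + z) = b)
                                        \<or> (xs ! j = v \<and> xs ! (j + z) = b \<and> xs ! Suc (j + z) = a))"
    by (rule walk_Pr_cong) (auto simp: doubleton_eq_iff)
  also have "\<dots> = ?c * step_dist V E z v a * trans_prob V E a b + ?c * step_dist V E z v b * trans_prob V E b a"
    using ab by (simp add: walk_Pr_disjoint_union finite_V walk_Pr_visit_step)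
  finally show ?thesis
    using den pos assms(1) ab by (simp add: trans_prob_def field_simps)
qed

end

theorem lemma1:
  fixes V :: "'a set" and E :: "'a \<Rightarrow> 'a \<Rightarrow> bool" and \<delta> :: real
    and \<mu>0 :: "'a \<Rightarrow> real" and v :: 'a and j z :: nat and e :: "'a set"
  assumes "simple_graph V E" and "connected_graph V E"
    and "\<delta> > 0"
    and "\<exists>t. is_mixed V E \<delta> t"
    and "init_dist V \<mu>0"
    and "z \<ge> mixing_time V E \<delta>"
    and "e \<in> edges V E"
    and "walk_Pr V E \<mu>0 (Suc (j + z)) (\<lambda>xs. xs ! j = v) > 0"
  shows "1 / real (card (edges V E)) - 2 * \<delta> / real (min_degree V E)
           \<le> walk_Pr V E \<mu>0 (Suc (j + z)) (\<lambda>xs. xs ! j = v \<and> {xs ! (j + z), xs ! Suc (j + z)} = e)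
             / walk_Pr V E \<mu>0 (Suc (j + z)) (\<lambda>xs. xs ! j = v)
       \<and> walk_Pr V E \<mu>0 (Suc (j + z)) (\<lambda>xs. xs ! j = v \<and> {xs ! (j + z), xs ! Suc (j + z)} = e)
             / walk_Pr V E \<mu>0 (Suc (j + z)) (\<lambda>xs. xs ! j = v)
           \<le> 1 / real (card (edges V E)) + 2 * \<delta> / real (min_degree V E)"
proof -
  from assms(7) obtain a b where e: "e = {a, b}" "E a b"
    unfolding edges_def by blast
  interpret connected_simple_graph V E
    using assms(1,2) e(2) by unfold_locales auto
  have "v \<in> V"
    using assms(8) by (rule visited_vertex_in_V) simp
  moreover have "a \<in> V" "b \<in> V"
    using e(2) edge_in_V by auto
  moreover have "is_mixed V E \<delta> z"
    using assms(4,6) by (rule is_mixed_beyond_mixing_time)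
  ultimately have
    "\<bar>step_dist V E z v a / degree V E a - 1 / (2 * card (edges V E))\<bar> \<le> \<delta> / min_degree V E"
    "\<bar>step_dist V E z v b / degree V E b - 1 / (2 * card (edges V E))\<bar> \<le> \<delta> / min_degree V E"
    using assms(3) step_dist_div_degree_close by auto
  then show ?thesis
    unfolding e(1) walk_Pr_edge_given_visit[OF e(2) assms(8)]
    by (simp add: field_simps abs_le_iff)
qed

end
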